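(* Let $\epsilon$ be an inversion sequence to which Algorithm A (described below) is applied, and let $\epsilon'$ be the resulting sequence. If $i$ is a transient occurrence of $p$, then $\epsilon'_{i+2}\neq\epsilon'_i$.
   Context: An inversion sequence of length $n$ is an integer sequence with $0\le\epsilon_i<i$ for all $i$. The reduction of an integer word replaces each occurrence of its $k$-th smallest distinct value by $k-1$; a consecutive pattern $\underline{p_1p_2p_3p_4}$ occurs in a sequence at position $i$ if the reduction of its entries in positions $i,\dots,i+3$ equals $p_1p_2p_3p_4$. Let $p=\underline{0102}$ and $q=\underline{0112}$. Algorithm A, on input an integer sequence $\mathrm{seq}=\epsilon_1\cdots\epsilon_n$: let $E_p$, $E_q$ be the sets of positions of occurrences of $p$, resp. $q$, in the input sequence; set $\mathrm{last}:=$ null. For $i=1,2,\dots,n$ in order: let $N_p,N_q$ be the sets of positions of occurrences of $p$, resp. $q$, in the current sequence. If $i-2\in E_p$: set $\mathrm{last}:=\mathrm{seq}[i]$ and $\mathrm{seq}[i]:=\mathrm{seq}[i-1]$. Else if $i-2\in E_q$: set $\mathrm{last}:=\mathrm{seq}[i]$ and $\mathrm{seq}[i]:=\mathrm{seq}[i-2]$. Else if $i-2\in N_p$ or $i-2\in N_q$: swap the values of $\mathrm{seq}[i]$ and $\mathrm{last}$. Output $\mathrm{seq}$. With $\epsilon$ the input and $\epsilon'$ the output: position $i$ is an original occurrence of $p$ if $\epsilon_i=\epsilon_{i+2}$ and $\epsilon_i<\epsilon_{i+1}<\epsilon_{i+3}$; it is a transient occurrence of $p$ if it is not an original occurrence of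 $p$ but $\epsilon'_i=\epsilon_{i+2}$ and $\epsilon'_i<\epsilon_{i+1}<\epsilon_{i+3}$. *)

theory Defs
  imports Main
begin

text \<open>Sequences are lists of naturals; positions are 1-based, as in the paper.\<close>

definition at :: "nat list \<Rightarrow> nat \<Rightarrow> nat" where
  "at s i = s ! (i - 1)"

definition inversion_seq :: "nat list \<Rightarrow> bool" where
  "inversion_seq e \<longleftrightarrow> (\<forall>i. 1 \<le> i \<and> i \<le> length e \<longrightarrow> at e i < i)"

definition reduction :: "nat list \<Rightarrow> nat list" where
  "reduction w = map (\<lambda>x. card {y \<in> set w. y < x}) w"

definition occ :: "nat list \<Rightarrow> nat list \<Rightarrow> nat \<Rightarrow> bool" where
  "occ pat s j \<longleftrightarrow> 1 \<le> j \<and> j + 3 \<le> length s \<and> reduction (take 4 (drop (j - 1) s)) = pat"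

definition pat_p :: "nat list" where "pat_p = [0,1,0,2]"
definition pat_q :: "nat list" where "pat_q = [0,1,1,2]"

text \<open>One step i of Algorithm A, with input sequence e, on state (current seq, last).
  last = None represents null.  Swapping with a null last is never reached;
  we leave the state unchanged in that case.\<close>
definition algA_step :: "nat list \<Rightarrow> nat \<Rightarrow> nat list \<times> nat option \<Rightarrow> nat list \<times> nat option" where
  "algA_step e i st = (let s = fst st; l = snd st in
     if 3 \<le> i \<and> occ pat_p e (i - 2) then (s[i - 1 := at s (i - 1)], Some (at s i))
     else if 3 \<le> i \<and> occ pat_q e (i - 2) then (s[i - 1 := at s (i - 2)], Some (at s i))
     else if 3 \<le> i \<and> (occ pat_p s (i - 2) \<or> occ pat_q s (i - 2)) then
       (case l of None \<Rightarrow> (s, l) | Some v \<Rightarrow> (s[i - 1 := v], Some (at s i)))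
     else (s, l))"

definition algA :: "nat list \<Rightarrow> nat list" where
  "algA e = fst (foldl (\<lambda>st i. algA_step e i st) (e, None) [1..<length e + 1])"

definition original_occ_p :: "nat list \<Rightarrow> nat \<Rightarrow> bool" where
  "original_occ_p e i \<longleftrightarrow> at e i = at e (i + 2) \<and> at e i < at e (i + 1) \<and> at e (i + 1) < at e (i + 3)"

definition transient_occ_p :: "nat list \<Rightarrow> nat \<Rightarrow> bool" where
  "transient_occ_p e i \<longleftrightarrow> \<not> original_occ_p e i \<and>
     (let e' = algA e in at e' i = at e (i + 2) \<and> at e' i < at e (i + 1) \<and> at e (i + 1) < at e (i + 3))"

end

theory Submission
  imports Defs
begin

text \<open>Since \<open>i\<close> is not an original occurrence of \<open>p\<close> but \<open>\<epsilon>'\<^sub>i = \<epsilon>\<^bsub>i+2\<^esub>\<close>, step \<open>i\<close>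
  of Algorithm A must have changed position \<open>i\<close>. This sets \<open>last := \<epsilon>\<^sub>i\<close>, and the occurrence at
  \<open>i - 2\<close> that triggered the step gives \<open>\<epsilon>\<^sub>i < \<epsilon>\<^bsub>i+1\<^esub>\<close>. Together with
  \<open>\<epsilon>'\<^sub>i = \<epsilon>\<^bsub>i+2\<^esub> < \<epsilon>\<^bsub>i+1\<^esub>\<close> this excludes every occurrence at \<open>i - 1\<close>, so step
  \<open>i + 1\<close> does nothing. At step \<open>i + 2\<close> the current sequence has \<open>p\<close> at \<open>i\<close>, while \<open>\<epsilon>\<close>
  has neither \<open>p\<close> nor \<open>q\<close> there, so \<open>\<epsilon>'\<^bsub>i+2\<^esub> = last = \<epsilon>\<^sub>i \<noteq> \<epsilon>'\<^sub>i\<close>.\<close>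

lemma card_less_less_iff:
  fixes S :: "'a::linorder set"
  assumes "finite S" "x \<in> S"
  shows "card {z \<in> S. z < x} < card {z \<in> S. z < y} \<longleftrightarrow> x < y"
proof (cases "x < y")
  case True
  then have "{z \<in> S. z < x} \<subset> {z \<in> S. z < y}" using assms(2) by auto
  with True show ?thesis using assms(1) by (simp add: psubset_card_mono)
next
  case False
  then have "{z \<in> S. z < y} \<subseteq> {z \<in> S. z < x}" by auto
  with False show ?thesis using assms(1) by (simp add: card_mono leD)
qed

lemma reduction_nth_less_iff:
  assumes "i < length w" "j < length w"
  shows "reduction w ! i < reduction w ! j \<longleftrightarrow> w ! i < w ! j"
  using assms card_less_less_iff[of "set w" "w ! i" "w ! j"] by (simp add: reduction_def)

lemma reduction_nth_eq_iff:
  assumes "i < length w" "j < length w"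
  shows "reduction w ! i = reduction w ! j \<longleftrightarrow> w ! i = w ! j"
  using reduction_nth_less_iff[OF assms] reduction_nth_less_iff[OF assms(2,1)]
  by (metis linorder_neq_iff)

lemma reduction_eq_0102_iff:
  fixes a b c d :: nat
  shows "reduction [a, b, c, d] = [0, 1, 0, 2] \<longleftrightarrow> a = c \<and> a < b \<and> b < d"
proof
  assume red: "reduction [a, b, c, d] = [0, 1, 0, 2]"
  show "a = c \<and> a < b \<and> b < d"
    using reduction_nth_eq_iff[of 0 "[a, b, c, d]" 2] reduction_nth_less_iff[of 0 "[a, b, c, d]" 1]
      reduction_nth_less_iff[of 1 "[a, b, c, d]" 3]
    unfolding red by simp
next
  assume ord: "a = c \<and> a < b \<and> b < d"
  then have "{y \<in> set [a, b, c, d]. y < a} = {}" "{y \<in> set [a, b, c, d]. y < b} = {a}"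
    "{y \<in> set [a, b, c, d]. y < d} = {a, b}"
    by auto
  with ord show "reduction [a, b, c, d] = [0, 1, 0, 2]"
    unfolding reduction_def by simp
qed

lemma reduction_eq_0112_iff:
  fixes a b c d :: nat
  shows "reduction [a, b, c, d] = [0, 1, 1, 2] \<longleftrightarrow> a < b \<and> b = c \<and> c < d"
proof
  assume red: "reduction [a, b, c, d] = [0, 1, 1, 2]"
  show "a < b \<and> b = c \<and> c < d"
    using reduction_nth_less_iff[of 0 "[a, b, c, d]" 1] reduction_nth_eq_iff[of 1 "[a, b, c, d]" 2]
      reduction_nth_less_iff[of 2 "[a, b, c, d]" 3]
    unfolding red by simp
next
  assume ord: "a < b \<and> b = c \<and> c < d"
  then have "{y \<in> set [a, b, c, d]. y < a} = {}" "{y \<in> set [a, b, c, d]. y < b} = {a}"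
    "{y \<in> set [a, b, c, d]. y < d} = {a, b}"
    by auto
  with ord show "reduction [a, b, c, d] = [0, 1, 1, 2]"
    unfolding reduction_def by simp
qed

lemma take_4_drop_eq_at:
  assumes "1 \<le> j" "j + 3 \<le> length s"
  shows "take 4 (drop (j - 1) s) = [at s j, at s (j + 1), at s (j + 2), at s (j + 3)]"
proof (rule nth_equalityI)
  fix k assume "k < length (take 4 (drop (j - 1) s))"
  then consider "k = 0" | "k = 1" | "k = 2" | "k = 3" by force
  then show "take 4 (drop (j - 1) s) ! k = [at s j, at s (j + 1), at s (j + 2), at s (j + 3)] ! k"
    using assms by cases (simp_all add: at_def)
qed (use assms in simp)

lemma occ_p_iff:
  "occ pat_p s j \<longleftrightarrow> 1 \<le> j \<and> j + 3 \<le> length s \<and>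
     at s j = at s (j + 2) \<and> at s j < at s (j + 1) \<and> at s (j + 1) < at s (j + 3)"
  unfolding occ_def pat_p_def using take_4_drop_eq_at reduction_eq_0102_iff by auto

lemma occ_q_iff:
  "occ pat_q s j \<longleftrightarrow> 1 \<le> j \<and> j + 3 \<le> length s \<and>
     at s j < at s (j + 1) \<and> at s (j + 1) = at s (j + 2) \<and> at s (j + 2) < at s (j + 3)"
  unfolding occ_def pat_q_def using take_4_drop_eq_at reduction_eq_0112_iff by auto

definition algA_run :: "nat list \<Rightarrow> nat \<Rightarrow> nat list \<times> nat option" where
  "algA_run e k = foldl (\<lambda>st i. algA_step e i st) (e, None) [1..<k + 1]"

lemma algA_run_0 [simp]: "algA_run e 0 = (e, None)"
  by (simp add: algA_run_def)

lemma algA_run_Suc [simp]: "algA_run e (Suc k) = algA_step e (Suc k) (algA_run e k)"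
  by (simp add: algA_run_def)

lemma algA_eq_algA_run: "algA e = fst (algA_run e (length e))"
  by (simp add: algA_def algA_run_def)

lemma length_algA_step [simp]: "length (fst (algA_step e i st)) = length (fst st)"
  by (simp add: algA_step_def Let_def split: option.split)

lemma length_algA_run [simp]: "length (fst (algA_run e k)) = length e"
  by (induction k) simp_all

lemma at_algA_step_other:
  assumes "1 \<le> p" "1 \<le> i" "p \<noteq> i"
  shows "at (fst (algA_step e i st)) p = at (fst st) p"
proof -
  have "p - 1 \<noteq> i - 1"
    using assms by simp
  then show ?thesis
    unfolding algA_step_def Let_def at_def by (auto split: option.splits)
qed

lemma at_algA_run_ahead: "k < p \<Longrightarrow> at (fst (algA_run e k)) p = at e p"
  by (induction k) (simp_all add: at_algA_step_other)

lemma at_algA_run_settled: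
  "1 \<le> p \<Longrightarrow> p \<le> k \<Longrightarrow> at (fst (algA_run e k)) p = at (fst (algA_run e p)) p"
proof (induction k)
  case (Suc k)
  then show ?case
    by (cases "p = Suc k") (simp_all add: at_algA_step_other)
qed simp

lemma at_algA:
  "1 \<le> p \<Longrightarrow> p \<le> length e \<Longrightarrow> at (algA e) p = at (fst (algA_run e p)) p"
  unfolding algA_eq_algA_run by (rule at_algA_run_settled)

lemma algA_step_idle:
  assumes "\<not> (3 \<le> i \<and> (occ pat_p e (i - 2) \<or> occ pat_q e (i - 2) \<or>
    occ pat_p (fst st) (i - 2) \<or> occ pat_q (fst st) (i - 2)))"
  shows "algA_step e i st = st"
  using assms unfolding algA_step_def Let_def by auto

lemma snd_algA_step_active:
  "algA_step e i st \<noteq> st \<Longrightarrow> snd (algA_step e i st) = Some (at (fst st) i)"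
  by (cases st) (auto simp: algA_step_def Let_def split: option.splits if_splits)

lemma at_algA_step_swap:
  assumes "3 \<le> i" "i \<le> length (fst st)" "\<not> occ pat_p e (i - 2)" "\<not> occ pat_q e (i - 2)"
    "occ pat_p (fst st) (i - 2)" "snd st = Some v"
  shows "at (fst (algA_step e i st)) i = v"
  using assms unfolding algA_step_def Let_def at_def by auto

lemma occ_imp_less: "occ pat_p s j \<or> occ pat_q s j \<Longrightarrow> at s (j + 2) < at s (j + 3)"
  by (auto simp: occ_p_iff occ_q_iff)

lemma algA_run_changed:
  assumes "at (fst (algA_run e i)) i \<noteq> at e i"
  shows "snd (algA_run e i) = Some (at e i)" and "at e i < at e (i + 1)"
proof -
  obtain k where i: "i = Suc k"
    using assms by (cases i) auto
  let ?st = "algA_run e k"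
  have ahead: "at (fst ?st) i = at e i" "at (fst ?st) (i + 1) = at e (i + 1)"
    by (simp_all add: i at_algA_run_ahead)
  have active: "algA_step e i ?st \<noteq> ?st"
    using assms ahead by (auto simp: i)
  then show "snd (algA_run e i) = Some (at e i)"
    using snd_algA_step_active ahead by (simp add: i)
  from active have "3 \<le> i" and "occ pat_p e (i - 2) \<or> occ pat_q e (i - 2) \<or>
      occ pat_p (fst ?st) (i - 2) \<or> occ pat_q (fst ?st) (i - 2)"
    using algA_step_idle by blast+
  moreover have "i - 2 + 2 = i" "i - 2 + 3 = i + 1"
    using \<open>3 \<le> i\<close> by simp_all
  ultimately show "at e i < at e (i + 1)"
    using occ_imp_less[of e "i - 2"] occ_imp_less[of "fst ?st" "i - 2"] ahead by metis
qed

lemma algA_run_Suc_unchanged: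
  assumes "1 \<le> i" "at e i < at e (i + 1)"
    and "at (fst (algA_run e i)) i = at e (i + 2)" "at (fst (algA_run e i)) i < at e (i + 1)"
  shows "algA_run e (Suc i) = algA_run e i"
proof -
  obtain k where i: "i = Suc k"
    using assms by (cases i) auto
  let ?s = "fst (algA_run e i)"
  have ahead: "at ?s (i + 1) = at e (i + 1)" "at ?s (i + 2) = at e (i + 2)"
    by (simp_all add: at_algA_run_ahead)
  have "\<not> occ pat_p e k" "\<not> occ pat_q e k" "\<not> occ pat_p ?s k" "\<not> occ pat_q ?s k"
    using assms(2-4) ahead unfolding occ_p_iff occ_q_iff i by simp_all
  then show ?thesis
    using algA_step_idle[of "Suc i" e "algA_run e i"] by (simp add: i)
qed

theorem lemma5:
  fixes e :: "nat list" and i :: nat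
  assumes "inversion_seq e"
    and "1 \<le> i" and "i + 3 \<le> length e"
    and "transient_occ_p e i"
  shows "at (algA e) (i + 2) \<noteq> at (algA e) i"
proof -
  let ?s = "fst (algA_run e i)"
  have transient: "at ?s i = at e (i + 2)" "at ?s i < at e (i + 1)" "at e (i + 1) < at e (i + 3)"
    and not_original: "\<not> original_occ_p e i"
    using assms(2-4) at_algA[of i e] unfolding transient_occ_p_def Let_def by auto
  then have moved: "at ?s i \<noteq> at e i"
    by (auto simp: original_occ_p_def)
  note last = algA_run_changed[OF moved]
  have idle: "algA_run e (Suc i) = algA_run e i"
    using algA_run_Suc_unchanged assms(2) last(2) transient(1,2) by blast
  have "occ pat_p ?s i"
    using transient assms(2,3) by (simp add: occ_p_iff at_algA_run_ahead)
  moreover have "\<not> occ pat_p e i"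
    using not_original by (simp add: occ_p_iff original_occ_p_def)
  moreover have "\<not> occ pat_q e i"
    using transient(1,2) by (simp add: occ_q_iff)
  ultimately have "at (fst (algA_run e (i + 2))) (i + 2) = at e i"
    using at_algA_step_swap[of "i + 2" "algA_run e (Suc i)"] idle last(1) assms(2,3) by simp
  then show ?thesis
    using at_algA[of i e] at_algA[of "i + 2" e] assms(2,3) moved by simp
qed

end
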